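(* Let $\mathfrak{g}$ be a connected soluble ranked Lie ring such that $\mathfrak{g}'$ is nilpotent. Then the Frattini subring $\Phi(\mathfrak{g})$ is an ideal of $\mathfrak{g}$.
   Context: A ranked Lie ring is a Lie ring definable in a structure of finite Morley rank; connected means no proper definable subgroup of finite index. The Frattini subring $\Phi(\mathfrak{g})$ of a connected ranked Lie ring $\mathfrak{g}$ is the intersection of all proper definable connected subrings of $\mathfrak{g}$ that are maximal among proper definable connected subrings. *)

theory Defs
  imports Main
begin

definition lie_ring :: "('a::ab_group_add \<Rightarrow> 'a \<Rightarrow> 'a) \<Rightarrow> bool" where
  "lie_ring br \<longleftrightarrow>
     (\<forall>x y z. br (x + y) z = br x z + br y z) \<and>
     (\<forall>x y z. br x (y + z) = br x y + br x z) \<and>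
     (\<forall>x. br x x = 0) \<and>
     (\<forall>x y z. br x (br y z) + br y (br z x) + br z (br x y) = 0)"

definition add_subgroup :: "'a::ab_group_add set \<Rightarrow> bool" where
  "add_subgroup H \<longleftrightarrow> 0 \<in> H \<and> (\<forall>x\<in>H. \<forall>y\<in>H. x - y \<in> H)"

definition lie_subring :: "('a::ab_group_add \<Rightarrow> 'a \<Rightarrow> 'a) \<Rightarrow> 'a set \<Rightarrow> bool" where
  "lie_subring br H \<longleftrightarrow> add_subgroup H \<and> (\<forall>x\<in>H. \<forall>y\<in>H. br x y \<in> H)"

definition lie_ideal :: "('a::ab_group_add \<Rightarrow> 'a \<Rightarrow> 'a) \<Rightarrow> 'a set \<Rightarrow> bool" where
  "lie_ideal br I \<longleftrightarrow> add_subgroup I \<and> (\<forall>x. \<forall>y\<in>I. br x y \<in> I)"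

definition gen_subgroup :: "'a::ab_group_add set \<Rightarrow> 'a set" where
  "gen_subgroup S = \<Inter>{H. add_subgroup H \<and> S \<subseteq> H}"

definition br_set :: "('a::ab_group_add \<Rightarrow> 'a \<Rightarrow> 'a) \<Rightarrow> 'a set \<Rightarrow> 'a set \<Rightarrow> 'a set" where
  "br_set br A B = gen_subgroup {br a b | a b. a \<in> A \<and> b \<in> B}"

text \<open>Derived series: g^(0) = g, g^(k+1) = [g^(k), g^(k)]; in particular g' = derived br 1.\<close>
fun derived :: "('a::ab_group_add \<Rightarrow> 'a \<Rightarrow> 'a) \<Rightarrow> nat \<Rightarrow> 'a set" where
  "derived br 0 = UNIV"
| "derived br (Suc k) = br_set br (derived br k) (derived br k)"

definition soluble :: "('a::ab_group_add \<Rightarrow> 'a \<Rightarrow> 'a) \<Rightarrow> bool" where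
  "soluble br \<longleftrightarrow> (\<exists>k. derived br k = {0})"

text \<open>Lower central series of a Lie subring h: h_1 = h, h_(k+1) = [h_k, h].\<close>
fun lcs :: "('a::ab_group_add \<Rightarrow> 'a \<Rightarrow> 'a) \<Rightarrow> 'a set \<Rightarrow> nat \<Rightarrow> 'a set" where
  "lcs br h 0 = h"
| "lcs br h (Suc k) = br_set br (lcs br h k) h"

definition nilpotent_subring :: "('a::ab_group_add \<Rightarrow> 'a \<Rightarrow> 'a) \<Rightarrow> 'a set \<Rightarrow> bool" where
  "nilpotent_subring br h \<longleftrightarrow> (\<exists>k. lcs br h k = {0})"

text \<open>A family D of sets of tuples is the
  family of all parameter-definable sets of a first-order structure on the universe
  (take the members of D themselves as basic relations) iff it satisfies the closure
  conditions below.\<close>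

definition tuples :: "nat \<Rightarrow> 'a list set" where
  "tuples n = {xs. length xs = n}"

definition fib :: "nat \<Rightarrow> 'a list set \<Rightarrow> 'a list \<Rightarrow> 'a list set" where
  "fib m A b = {xs. b @ xs \<in> A}"

definition definable_family :: "'a list set set \<Rightarrow> bool" where
  "definable_family D \<longleftrightarrow>
     (\<forall>S\<in>D. \<exists>n. S \<subseteq> tuples n) \<and>
     (\<forall>n. tuples n \<in> D) \<and>
     (\<forall>S\<in>D. \<forall>T\<in>D. S \<inter> T \<in> D) \<and>
     (\<forall>S\<in>D. \<forall>n. S \<subseteq> tuples n \<longrightarrow> tuples n - S \<in> D) \<and>
     (\<forall>n i j. i < n \<longrightarrow> j < n \<longrightarrow> {xs \<in> tuples n. xs ! i = xs ! j} \<in> D) \<and>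
     (\<forall>n i a. i < n \<longrightarrow> {xs \<in> tuples n. xs ! i = a} \<in> D) \<and>
     (\<forall>S\<in>D. \<forall>T\<in>D. {xs @ ys | xs ys. xs \<in> S \<and> ys \<in> T} \<in> D) \<and>
     (\<forall>S\<in>D. \<forall>n p. S \<subseteq> tuples n \<longrightarrow> bij_betw p {..<n} {..<n} \<longrightarrow>
         (\<lambda>xs. map (\<lambda>i. xs ! p i) [0..<n]) ` S \<in> D) \<and>
     (\<forall>S\<in>D. \<forall>n. S \<subseteq> tuples (Suc n) \<longrightarrow> take n ` S \<in> D)"

definition ranked :: "'a list set set \<Rightarrow> ('a list set \<Rightarrow> nat) \<Rightarrow> bool" where
  "ranked D rk \<longleftrightarrow>
     definable_family D \<and>
     \<comment> \<open>monotonicity: rk A \<ge> k+1 iff infinitely many pairwise disjoint definable subsets of rank \<ge> k\<close>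
     (\<forall>A\<in>D. \<forall>k. A \<noteq> {} \<longrightarrow>
        (Suc k \<le> rk A \<longleftrightarrow>
          (\<exists>F. infinite F \<and> F \<subseteq> D \<and> pairwise disjnt F \<and>
               (\<forall>X\<in>F. X \<subseteq> A \<and> X \<noteq> {} \<and> k \<le> rk X)))) \<and>
     \<comment> \<open>definability of rank\<close>
     (\<forall>A\<in>D. \<forall>m n k. A \<subseteq> tuples (m + n) \<longrightarrow>
        {b \<in> tuples m. fib m A b \<noteq> {} \<and> rk (fib m A b) = k} \<in> D) \<and>
     \<comment> \<open>additivity\<close>
     (\<forall>A\<in>D. \<forall>B\<in>D. \<forall>n m k (f :: 'a list \<Rightarrow> 'a list).
        A \<subseteq> tuples n \<longrightarrow> B \<subseteq> tuples m \<longrightarrow> B \<noteq> {} \<longrightarrow> f ` A \<subseteq> B \<longrightarrow>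
        {a @ f a | a. a \<in> A} \<in> D \<longrightarrow>
        (\<forall>b\<in>B. {a\<in>A. f a = b} \<noteq> {} \<and> rk {a\<in>A. f a = b} = k) \<longrightarrow>
        rk A = rk B + k) \<and>
     \<comment> \<open>elimination of infinite quantifiers\<close>
     (\<forall>A\<in>D. \<forall>m n. A \<subseteq> tuples (m + n) \<longrightarrow>
        (\<exists>N. \<forall>b\<in>tuples m. finite (fib m A b) \<longrightarrow> card (fib m A b) \<le> N))"

definition definable :: "'a list set set \<Rightarrow> 'a set \<Rightarrow> bool" where
  "definable D H \<longleftrightarrow> (\<lambda>x. [x]) ` H \<in> D"

definition ranked_lie_ring ::
  "('a::ab_group_add \<Rightarrow> 'a \<Rightarrow> 'a) \<Rightarrow> 'a list set set \<Rightarrow> ('a list set \<Rightarrow> nat) \<Rightarrow> bool" where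
  "ranked_lie_ring br D rk \<longleftrightarrow> lie_ring br \<and> ranked D rk \<and>
     {[x, y, x + y] | x y. True} \<in> D \<and> {[x, y, br x y] | x y. True} \<in> D"

definition connected :: "'a list set set \<Rightarrow> 'a::ab_group_add set \<Rightarrow> bool" where
  "connected D H \<longleftrightarrow>
     (\<forall>K. add_subgroup K \<longrightarrow> K \<subseteq> H \<longrightarrow> definable D K \<longrightarrow>
        finite ((\<lambda>x. (+) x ` K) ` H) \<longrightarrow> K = H)"

definition def_conn_subring ::
  "('a::ab_group_add \<Rightarrow> 'a \<Rightarrow> 'a) \<Rightarrow> 'a list set set \<Rightarrow> 'a set \<Rightarrow> bool" where
  "def_conn_subring br D H \<longleftrightarrow> lie_subring br H \<and> definable D H \<and> connected D H"

definition maximal_def_conn_subring ::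
  "('a::ab_group_add \<Rightarrow> 'a \<Rightarrow> 'a) \<Rightarrow> 'a list set set \<Rightarrow> 'a set \<Rightarrow> bool" where
  "maximal_def_conn_subring br D H \<longleftrightarrow>
     def_conn_subring br D H \<and> H \<noteq> UNIV \<and>
     (\<forall>K. def_conn_subring br D K \<longrightarrow> K \<noteq> UNIV \<longrightarrow> H \<subseteq> K \<longrightarrow> K = H)"

definition frattini :: "('a::ab_group_add \<Rightarrow> 'a \<Rightarrow> 'a) \<Rightarrow> 'a list set set \<Rightarrow> 'a set" where
  "frattini br D = \<Inter>{H. maximal_def_conn_subring br D H}"

end

theory Submission
  imports Defs HOL.Modules "HOL-Library.Set_Algebras"
begin

text \<open>
  Fix a maximal definable connected subring \<open>M\<close> and \<open>y \<in> \<Phi>(\<gg>)\<close>; we show \<open>[x, y] \<in> M\<close>.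
  By a Zilber-type rank argument, subgroups generated by definable connected subgroups are
  definable and connected, so every term \<open>\<gamma>\<^sub>i\<close> of the lower central series of \<open>\<gg>'\<close> is a
  definable connected ideal; by nilpotency some \<open>\<gamma>\<^sub>k\<close> is \<open>0\<close>. If \<open>\<gg>' \<subseteq> M\<close> we are done.
  Otherwise pick \<open>i\<close> with \<open>\<gamma>\<^sub>i\<^sub>+\<^sub>1 \<subseteq> M\<close> but not \<open>\<gamma>\<^sub>i \<subseteq> M\<close>. As \<open>[\<gamma>\<^sub>i, \<gamma>\<^sub>i] \<subseteq> \<gamma>\<^sub>i\<^sub>+\<^sub>1\<close>,
  \<open>M + \<gamma>\<^sub>i\<close> is a definable connected subring properly containing \<open>M\<close>, hence all of \<open>\<gg>\<close>;
  write \<open>x = m + a\<close> with \<open>a \<in> \<gamma>\<^sub>i\<close>. Since \<open>[m, y] \<in> M\<close>, it remains to see \<open>[a, y] \<in> M\<close>.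
  Modulo \<open>\<gamma>\<^sub>i\<^sub>+\<^sub>1\<close>, the map \<open>1 + ad a\<close> is an automorphism, so \<open>(1 + ad a) M + \<gamma>\<^sub>i\<^sub>+\<^sub>1\<close> is again
  maximal and contains \<open>y\<close>; writing \<open>y = m' + [a, m'] + b\<close> shows \<open>[a, m'] \<in> M\<close> and
  then \<open>[a, y] \<in> M\<close>.
\<close>

section \<open>Additive subgroups, cosets and index\<close>

lemma add_subgroup_zero: "add_subgroup H \<Longrightarrow> 0 \<in> H"
  by (simp add: add_subgroup_def)

lemma add_subgroup_diff: "add_subgroup H \<Longrightarrow> x \<in> H \<Longrightarrow> y \<in> H \<Longrightarrow> x - y \<in> H"
  by (simp add: add_subgroup_def)

lemma add_subgroup_uminus: "add_subgroup H \<Longrightarrow> x \<in> H \<Longrightarrow> - x \<in> H"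
  using add_subgroup_diff[of H 0 x] add_subgroup_zero[of H] by simp

lemma add_subgroup_add: "add_subgroup H \<Longrightarrow> x \<in> H \<Longrightarrow> y \<in> H \<Longrightarrow> x + y \<in> H"
  using add_subgroup_diff[of H x "- y"] add_subgroup_uminus[of H y] by simp

lemma add_subgroup_UNIV: "add_subgroup UNIV"
  by (simp add: add_subgroup_def)

lemma add_subgroup_zero_set: "add_subgroup {0}"
  by (simp add: add_subgroup_def)

lemma add_subgroup_Int: "add_subgroup H \<Longrightarrow> add_subgroup K \<Longrightarrow> add_subgroup (H \<inter> K)"
  by (simp add: add_subgroup_def)

lemma add_subgroup_set_plus:
  assumes H: "add_subgroup H" and K: "add_subgroup K"
  shows "add_subgroup (H + K)"
  unfolding add_subgroup_def
proof (intro conjI ballI)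
  show "0 \<in> H + K"
    using set_plus_intro[OF add_subgroup_zero[OF H] add_subgroup_zero[OF K]] by simp
next
  fix x y
  assume "x \<in> H + K" "y \<in> H + K"
  then obtain h k h' k' where "h \<in> H" "k \<in> K" "h' \<in> H" "k' \<in> K" "x = h + k" "y = h' + k'"
    by (auto elim!: set_plus_elim)
  then have "x - y = (h - h') + (k - k')" "h - h' \<in> H" "k - k' \<in> K"
    using H K by (auto simp: algebra_simps intro: add_subgroup_diff)
  then show "x - y \<in> H + K"
    by (metis set_plus_intro)
qed

lemma subset_set_plus_left: "add_subgroup K \<Longrightarrow> H \<subseteq> H + K"
  using set_plus_intro[of _ H 0 K] add_subgroup_zero[of K] by force

lemma subset_set_plus_right: "add_subgroup H \<Longrightarrow> K \<subseteq> H + K"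
  using set_plus_intro[of 0 H _ K] add_subgroup_zero[of H] by force

lemma set_plus_least: "add_subgroup J \<Longrightarrow> H \<subseteq> J \<Longrightarrow> K \<subseteq> J \<Longrightarrow> H + K \<subseteq> J"
  by (auto elim!: set_plus_elim intro: add_subgroup_add)

lemma add_subgroup_image:
  assumes f: "additive f" and H: "add_subgroup H"
  shows "add_subgroup (f ` H)"
  unfolding add_subgroup_def
proof (intro conjI ballI)
  show "0 \<in> f ` H"
    using additive.zero[OF f] add_subgroup_zero[OF H] by (metis imageI)
next
  fix x y
  assume "x \<in> f ` H" "y \<in> f ` H"
  then obtain a b where "a \<in> H" "b \<in> H" "x = f a" "y = f b"
    by blast
  then show "x - y \<in> f ` H"
    using additive.diff[OF f] add_subgroup_diff[OF H] by (metis imageI)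
qed

lemma add_subgroup_vimage: "additive f \<Longrightarrow> add_subgroup K \<Longrightarrow> add_subgroup (f -` K)"
  by (simp add: add_subgroup_def additive.zero additive.diff)

lemma add_subgroup_gen_subgroup: "add_subgroup (gen_subgroup S)"
  by (auto simp: gen_subgroup_def add_subgroup_def)

lemma subset_gen_subgroup: "S \<subseteq> gen_subgroup S"
  by (auto simp: gen_subgroup_def)

lemma gen_subgroup_least: "add_subgroup H \<Longrightarrow> S \<subseteq> H \<Longrightarrow> gen_subgroup S \<subseteq> H"
  by (auto simp: gen_subgroup_def)

lemma additive_image_gen_subgroup:
  "additive f \<Longrightarrow> add_subgroup H \<Longrightarrow> f ` S \<subseteq> H \<Longrightarrow> f ` gen_subgroup S \<subseteq> H"
  using gen_subgroup_least[OF add_subgroup_vimage, of f H S] by blast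

lemma coset_subset:
  assumes K: "add_subgroup K" and "x - y \<in> K"
  shows "(+) x ` K \<subseteq> (+) y ` K"
proof
  fix z
  assume "z \<in> (+) x ` K"
  then obtain k where "k \<in> K" "z = x + k"
    by blast
  then have "(x - y) + k \<in> K" "z = y + ((x - y) + k)"
    using assms add_subgroup_add by (blast, simp add: algebra_simps)
  then show "z \<in> (+) y ` K"
    by blast
qed

lemma coset_eq_iff:
  assumes K: "add_subgroup K"
  shows "(+) x ` K = (+) y ` K \<longleftrightarrow> x - y \<in> K"
proof
  assume "(+) x ` K = (+) y ` K"
  then have "x + 0 \<in> (+) y ` K"
    using add_subgroup_zero[OF K] by blast
  then show "x - y \<in> K"
    by (auto simp: algebra_simps)
next
  assume xy: "x - y \<in> K"
  then have "y - x \<in> K"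
    using add_subgroup_uminus[OF K] by (metis minus_diff_eq)
  with xy show "(+) x ` K = (+) y ` K"
    using coset_subset[OF K] by blast
qed

lemma disjnt_cosets:
  assumes K: "add_subgroup K" and "(+) x ` K \<noteq> (+) y ` K"
  shows "disjnt ((+) x ` K) ((+) y ` K)"
proof (rule ccontr)
  assume "\<not> disjnt ((+) x ` K) ((+) y ` K)"
  then obtain k k' where "k \<in> K" "k' \<in> K" "x + k = y + k'"
    unfolding disjnt_def by blast
  then have "x - y = k' - k" "k' - k \<in> K"
    using add_subgroup_diff[OF K] by (auto simp: algebra_simps)
  with assms(2) show False
    using coset_eq_iff[OF K] by simp
qed

lemma pairwise_disjnt_coset_tuples:
  assumes K: "add_subgroup K"
  shows "pairwise disjnt ((\<lambda>x. (\<lambda>y. [y]) ` (+) x ` K) ` H)"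
proof (rule pairwiseI)
  fix X Y
  assume "X \<in> (\<lambda>x. (\<lambda>y. [y]) ` (+) x ` K) ` H" "Y \<in> (\<lambda>x. (\<lambda>y. [y]) ` (+) x ` K) ` H" "X \<noteq> Y"
  then obtain x y where X: "X = (\<lambda>y. [y]) ` (+) x ` K" and Y: "Y = (\<lambda>y. [y]) ` (+) y ` K"
    and "(+) x ` K \<noteq> (+) y ` K"
    by blast
  then have "disjnt ((+) x ` K) ((+) y ` K)"
    using disjnt_cosets[OF K] by blast
  then show "disjnt X Y"
    unfolding X Y disjnt_def by blast
qed

lemma finite_image_factor:
  assumes "finite (g ` S)" and "\<And>x y. x \<in> S \<Longrightarrow> y \<in> S \<Longrightarrow> g x = g y \<Longrightarrow> h x = h y"
  shows "finite (h ` S)"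
proof -
  have "h ` S \<subseteq> (\<lambda>v. h (inv_into S g v)) ` g ` S"
  proof
    fix z
    assume "z \<in> h ` S"
    then obtain x where x: "x \<in> S" "z = h x"
      by blast
    then have "z = (\<lambda>v. h (inv_into S g v)) (g x)"
      using assms(2) by (metis imageI inv_into_into f_inv_into_f)
    with x(1) show "z \<in> (\<lambda>v. h (inv_into S g v)) ` g ` S"
      by blast
  qed
  with assms(1) show ?thesis
    by (meson finite_imageI finite_subset)
qed

definition finite_index :: "'a::ab_group_add set \<Rightarrow> 'a set \<Rightarrow> bool" where
  "finite_index K H \<longleftrightarrow> finite ((\<lambda>x. (+) x ` K) ` H)"

lemma finite_index_subset: "finite_index K H \<Longrightarrow> L \<subseteq> H \<Longrightarrow> finite_index K L"
  unfolding finite_index_def by (meson finite_subset image_mono)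

lemma finite_index_vimage:
  assumes f: "additive f" and H: "add_subgroup H" and K: "add_subgroup K"
    and index: "finite_index K (f ` H)"
  shows "finite_index (H \<inter> f -` K) H"
  unfolding finite_index_def
proof (rule finite_image_factor[where g = "\<lambda>x. (+) (f x) ` K"])
  show "finite ((\<lambda>x. (+) (f x) ` K) ` H)"
    using index by (simp add: finite_index_def image_image)
next
  fix x y
  assume "x \<in> H" "y \<in> H" "(+) (f x) ` K = (+) (f y) ` K"
  then have "x - y \<in> H \<inter> f -` K"
    using coset_eq_iff[OF K] add_subgroup_diff[OF H] additive.diff[OF f] by auto
  then show "(+) x ` (H \<inter> f -` K) = (+) y ` (H \<inter> f -` K)"
    using coset_eq_iff[OF add_subgroup_Int[OF H add_subgroup_vimage[OF f K]]] by blast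
qed

section \<open>Definable sets and maps\<close>

definition definable_pred :: "'a list set set \<Rightarrow> nat \<Rightarrow> ('a list \<Rightarrow> bool) \<Rightarrow> bool" where
  "definable_pred D n P \<longleftrightarrow> {xs \<in> tuples n. P xs} \<in> D"

definition definable_map :: "'a list set set \<Rightarrow> ('a \<Rightarrow> 'a) \<Rightarrow> bool" where
  "definable_map D f \<longleftrightarrow> definable_pred D 2 (\<lambda>xs. xs ! 1 = f (xs ! 0))"

definition definable_op :: "'a list set set \<Rightarrow> ('a \<Rightarrow> 'a \<Rightarrow> 'a) \<Rightarrow> bool" where
  "definable_op D op \<longleftrightarrow> definable_pred D 3 (\<lambda>xs. xs ! 2 = op (xs ! 0) (xs ! 1))"

lemma definable_pred_cong:
  assumes "definable_pred D n P" and "\<And>xs. length xs = n \<Longrightarrow> P xs = Q xs"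
  shows "definable_pred D n Q"
proof -
  have "{xs \<in> tuples n. P xs} = {xs \<in> tuples n. Q xs}"
    using assms(2) by (auto simp: tuples_def)
  with assms(1) show ?thesis
    by (simp add: definable_pred_def)
qed

lemma definable_iff_pred: "definable D H \<longleftrightarrow> definable_pred D 1 (\<lambda>xs. xs ! 0 \<in> H)"
proof -
  have "(\<lambda>x. [x]) ` H = {xs \<in> tuples 1. xs ! 0 \<in> H}"
    by (auto simp: tuples_def length_Suc_conv)
  then show ?thesis
    by (simp add: definable_def definable_pred_def)
qed

lemma definable_op_iff_graph: "definable_op D op \<longleftrightarrow> {[x, y, op x y] | x y. True} \<in> D"
proof -
  have "{[x, y, op x y] | x y. True} = {xs \<in> tuples 3. xs ! 2 = op (xs ! 0) (xs ! 1)}"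
    by (auto simp: tuples_def length_Suc_conv numeral_3_eq_3)
  then show ?thesis
    by (simp add: definable_op_def definable_pred_def)
qed

locale definable_structure =
  fixes D :: "'a list set set"
  assumes definable_family: "definable_family D"
begin

lemma definable_pred_True: "definable_pred D n (\<lambda>_. True)"
  using definable_family by (simp add: definable_family_def definable_pred_def)

lemma definable_pred_conj:
  assumes "definable_pred D n P" and "definable_pred D n Q"
  shows "definable_pred D n (\<lambda>xs. P xs \<and> Q xs)"
proof -
  have "{xs \<in> tuples n. P xs} \<inter> {xs \<in> tuples n. Q xs} \<in> D"
    using assms definable_family by (simp add: definable_pred_def definable_family_def)
  moreover have "{xs \<in> tuples n. P xs} \<inter> {xs \<in> tuples n. Q xs} = {xs \<in> tuples n. P xs \<and> Q xs}"
    by blast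
  ultimately show ?thesis
    by (simp add: definable_pred_def)
qed

lemma definable_pred_All_less:
  "(\<And>i. i < (k::nat) \<Longrightarrow> definable_pred D n (P i)) \<Longrightarrow> definable_pred D n (\<lambda>xs. \<forall>i<k. P i xs)"
proof (induction k)
  case 0
  show ?case
    using definable_pred_True by simp
next
  case (Suc k)
  then have "definable_pred D n (\<lambda>xs. (\<forall>i<k. P i xs) \<and> P k xs)"
    by (intro definable_pred_conj) auto
  then show ?case
    by (rule definable_pred_cong) (auto simp: less_Suc_eq)
qed

lemma definable_pred_nth_eq: "i < n \<Longrightarrow> j < n \<Longrightarrow> definable_pred D n (\<lambda>xs. xs ! i = xs ! j)"
  using definable_family by (simp add: definable_family_def definable_pred_def)

lemma definable_pred_nth_eq_const: "i < n \<Longrightarrow> definable_pred D n (\<lambda>xs. xs ! i = a)"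
  using definable_family by (simp add: definable_family_def definable_pred_def)

lemma definable_pred_ex_last:
  assumes "definable_pred D (Suc n) P"
  shows "definable_pred D n (\<lambda>xs. \<exists>y. P (xs @ [y]))"
proof -
  have "take n ` {xs \<in> tuples (Suc n). P xs} \<in> D"
    using assms definable_family unfolding definable_pred_def definable_family_def
    by (metis (no_types, lifting) mem_Collect_eq subsetI)
  moreover have "take n ` {xs \<in> tuples (Suc n). P xs} = {xs \<in> tuples n. \<exists>y. P (xs @ [y])}"
  proof (intro equalityI subsetI)
    fix xs
    assume "xs \<in> take n ` {xs \<in> tuples (Suc n). P xs}"
    then show "xs \<in> {xs \<in> tuples n. \<exists>y. P (xs @ [y])}"
      by (auto simp: tuples_def length_Suc_conv_rev)
  next
    fix xs
    assume "xs \<in> {xs \<in> tuples n. \<exists>y. P (xs @ [y])}"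
    then show "xs \<in> take n ` {xs \<in> tuples (Suc n). P xs}"
      by (force simp: tuples_def intro: image_eqI[where x = "xs @ [_]"])
  qed
  ultimately show ?thesis
    by (simp add: definable_pred_def)
qed

lemma definable_pred_ex_suffix:
  "definable_pred D (m + k) P \<Longrightarrow> definable_pred D m (\<lambda>ys. \<exists>zs. length zs = k \<and> P (ys @ zs))"
proof (induction k arbitrary: P)
  case 0
  then have "definable_pred D m P"
    by simp
  then show ?case
    by (rule definable_pred_cong) simp
next
  case (Suc k)
  then have "definable_pred D (m + k) (\<lambda>xs. \<exists>y. P (xs @ [y]))"
    by (intro definable_pred_ex_last) simp
  then have "definable_pred D m (\<lambda>ys. \<exists>zs. length zs = k \<and> (\<exists>y. P ((ys @ zs) @ [y])))"
    by (rule Suc.IH)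
  then show ?case
    by (rule definable_pred_cong) (metis append.assoc length_Suc_conv_rev length_append_singleton)
qed

lemma definable_pred_append:
  assumes "definable_pred D m P" and "definable_pred D n Q"
  shows "definable_pred D (m + n) (\<lambda>ws. P (take m ws) \<and> Q (drop m ws))"
proof -
  have "{xs @ ys | xs ys. xs \<in> {xs \<in> tuples m. P xs} \<and> ys \<in> {xs \<in> tuples n. Q xs}} \<in> D"
    using assms definable_family unfolding definable_pred_def definable_family_def by blast
  moreover have "{xs @ ys | xs ys. xs \<in> {xs \<in> tuples m. P xs} \<and> ys \<in> {xs \<in> tuples n. Q xs}}
      = {ws \<in> tuples (m + n). P (take m ws) \<and> Q (drop m ws)}"
  proof (intro equalityI subsetI)
    fix ws
    assume "ws \<in> {ws \<in> tuples (m + n). P (take m ws) \<and> Q (drop m ws)}"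
    then show "ws \<in> {xs @ ys | xs ys. xs \<in> {xs \<in> tuples m. P xs} \<and> ys \<in> {xs \<in> tuples n. Q xs}}"
      by (intro CollectI exI[of _ "take m ws"] exI[of _ "drop m ws"]) (auto simp: tuples_def)
  qed (auto simp: tuples_def)
  ultimately show ?thesis
    by (simp add: definable_pred_def)
qed

lemma definable_pred_reindex:
  assumes P: "definable_pred D n P" and n: "length ss = n" and ss: "\<forall>i\<in>set ss. i < m"
  shows "definable_pred D m (\<lambda>ys. P (map ((!) ys) ss))"
proof -
  let ?n = "length ss"
  note P = P[folded n]
  let ?copy = "\<lambda>ws. \<forall>i<?n. ws ! (m + i) = ws ! (ss ! i)"
  have "definable_pred D (m + ?n) (\<lambda>ws. P (drop m ws) \<and> ?copy ws)"
    using definable_pred_append[OF definable_pred_True P] ss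
    by (intro definable_pred_conj definable_pred_All_less definable_pred_nth_eq)
      (auto intro: trans_less_add1)
  then have "definable_pred D m (\<lambda>ys. \<exists>zs. length zs = ?n \<and> P (drop m (ys @ zs)) \<and> ?copy (ys @ zs))"
    by (rule definable_pred_ex_suffix)
  then show ?thesis
  proof (rule definable_pred_cong)
    fix ys :: "'a list"
    assume ys: "length ys = m"
    have copy_iff: "?copy (ys @ zs) \<longleftrightarrow> zs = map ((!) ys) ss" if "length zs = ?n" for zs
      using ss ys that by (auto simp: nth_append intro!: nth_equalityI)
    show "(\<exists>zs. length zs = ?n \<and> P (drop m (ys @ zs)) \<and> ?copy (ys @ zs)) = P (map ((!) ys) ss)"
    proof
      assume "\<exists>zs. length zs = ?n \<and> P (drop m (ys @ zs)) \<and> ?copy (ys @ zs)"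
      then show "P (map ((!) ys) ss)"
        using copy_iff ys by auto
    next
      assume "P (map ((!) ys) ss)"
      then show "\<exists>zs. length zs = ?n \<and> P (drop m (ys @ zs)) \<and> ?copy (ys @ zs)"
        using copy_iff ys by (intro exI[of _ "map ((!) ys) ss"]) simp
    qed
  qed
qed

lemma definable_UNIV: "definable D UNIV"
  by (simp add: definable_iff_pred definable_pred_True)

lemma definable_singleton: "definable D {a}"
  using definable_pred_nth_eq_const[of 0 1 a] by (simp add: definable_iff_pred)

lemma definable_Int: "definable D H \<Longrightarrow> definable D K \<Longrightarrow> definable D (H \<inter> K)"
  unfolding definable_iff_pred by (drule (1) definable_pred_conj) simp

lemma definable_image:
  assumes H: "definable D H" and f: "definable_map D f"
  shows "definable D (f ` H)"
proof -
  have "definable_pred D (Suc 1) (\<lambda>ys. ys ! 1 \<in> H \<and> ys ! 0 = f (ys ! 1))"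
    using definable_pred_reindex[OF H[unfolded definable_iff_pred], of "[1]"]
      definable_pred_reindex[OF f[unfolded definable_map_def], of "[1, 0]"]
    by (intro definable_pred_conj) simp_all
  then have "definable_pred D 1 (\<lambda>xs. \<exists>y. (xs @ [y]) ! 1 \<in> H \<and> (xs @ [y]) ! 0 = f ((xs @ [y]) ! 1))"
    by (rule definable_pred_ex_last)
  then show ?thesis
    unfolding definable_iff_pred by (rule definable_pred_cong) (auto simp: nth_append)
qed

lemma definable_vimage:
  assumes K: "definable D K" and f: "definable_map D f"
  shows "definable D (f -` K)"
proof -
  have "definable_pred D (Suc 1) (\<lambda>ys. ys ! 1 \<in> K \<and> ys ! 1 = f (ys ! 0))"
    using definable_pred_reindex[OF K[unfolded definable_iff_pred], of "[1]"] f
    by (intro definable_pred_conj) (simp_all add: definable_map_def numeral_2_eq_2)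
  then have "definable_pred D 1 (\<lambda>xs. \<exists>y. (xs @ [y]) ! 1 \<in> K \<and> (xs @ [y]) ! 1 = f ((xs @ [y]) ! 0))"
    by (rule definable_pred_ex_last)
  then show ?thesis
    unfolding definable_iff_pred by (rule definable_pred_cong) (auto simp: nth_append)
qed

lemma definable_map_id: "definable_map D (\<lambda>x. x)"
  by (simp add: definable_map_def definable_pred_nth_eq)

lemma definable_map_const: "definable_map D (\<lambda>_. a)"
  by (simp add: definable_map_def definable_pred_nth_eq_const)

lemma definable_map_op:
  assumes op: "definable_op D op" and f: "definable_map D f" and g: "definable_map D g"
  shows "definable_map D (\<lambda>x. op (f x) (g x))"
proof -
  have "definable_pred D (2 + 2) (\<lambda>ys. ys ! 2 = f (ys ! 0) \<and> ys ! 3 = g (ys ! 0) \<and> ys ! 1 = op (ys ! 2) (ys ! 3))"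
    using definable_pred_reindex[OF f[unfolded definable_map_def], of "[0, 2]"]
      definable_pred_reindex[OF g[unfolded definable_map_def], of "[0, 3]"]
      definable_pred_reindex[OF op[unfolded definable_op_def], of "[2, 3, 1]"]
    by (intro definable_pred_conj) simp_all
  then have "definable_pred D 2 (\<lambda>xs. \<exists>zs. length zs = 2 \<and> (xs @ zs) ! 2 = f ((xs @ zs) ! 0) \<and>
      (xs @ zs) ! 3 = g ((xs @ zs) ! 0) \<and> (xs @ zs) ! 1 = op ((xs @ zs) ! 2) ((xs @ zs) ! 3))"
    by (rule definable_pred_ex_suffix)
  then show ?thesis
    unfolding definable_map_def
  proof (rule definable_pred_cong)
    fix xs :: "'a list"
    assume xs: "length xs = 2"
    show "(\<exists>zs. length zs = 2 \<and> (xs @ zs) ! 2 = f ((xs @ zs) ! 0) \<and>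
        (xs @ zs) ! 3 = g ((xs @ zs) ! 0) \<and> (xs @ zs) ! 1 = op ((xs @ zs) ! 2) ((xs @ zs) ! 3))
      = (xs ! 1 = op (f (xs ! 0)) (g (xs ! 0)))" (is "?lhs = ?rhs")
    proof
      assume ?lhs
      then show ?rhs
        using xs by (auto simp: nth_append numeral_2_eq_2 length_Suc_conv)
    next
      assume ?rhs
      then show ?lhs
        using xs by (intro exI[of _ "[f (xs ! 0), g (xs ! 0)]"]) (simp add: nth_append)
    qed
  qed
qed

end

section \<open>Rank and definable connected subgroups\<close>

definition def_conn_subgroup :: "'a list set set \<Rightarrow> 'a::ab_group_add set \<Rightarrow> bool" where
  "def_conn_subgroup D H \<longleftrightarrow> add_subgroup H \<and> definable D H \<and> connected D H"

lemma connectedD: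
  "connected D H \<Longrightarrow> add_subgroup K \<Longrightarrow> K \<subseteq> H \<Longrightarrow> definable D K \<Longrightarrow> finite_index K H \<Longrightarrow> K = H"
  by (simp add: connected_def finite_index_def)

lemma def_conn_subgroup_zero: "definable D {0} \<Longrightarrow> def_conn_subgroup D {0}"
  by (auto simp: def_conn_subgroup_def add_subgroup_zero_set connected_def add_subgroup_zero)

locale ranked_group =
  fixes D :: "'a::ab_group_add list set set" and rk :: "'a list set \<Rightarrow> nat"
  assumes ranked: "ranked D rk"
    and definable_plus: "definable_op D (+)"
begin

sublocale definable_structure D
  using ranked by unfold_locales (simp add: ranked_def)

lemma def_conn_subgroup_subset_of_finite_index:
  assumes L: "def_conn_subgroup D L" and J: "add_subgroup J" "definable D J"
    and "L \<subseteq> S" and "finite_index J S"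
  shows "L \<subseteq> J"
proof -
  have L': "add_subgroup L" "definable D L" "connected D L"
    using L by (auto simp: def_conn_subgroup_def)
  have "finite_index J (id ` L)"
    using assms(4,5) finite_index_subset by simp
  moreover have "additive (id :: 'a \<Rightarrow> 'a)"
    by (simp add: additive_def)
  ultimately have "finite_index (L \<inter> J) L"
    using finite_index_vimage[OF _ L'(1) J(1)] by fastforce
  moreover have "definable D (L \<inter> J)"
    using L'(2) J(2) by (rule definable_Int)
  ultimately have "L \<inter> J = L"
    using connectedD[OF L'(3) add_subgroup_Int[OF L'(1) J(1)]] by simp
  then show ?thesis
    by blast
qed

lemma definable_map_translate: "definable_map D ((+) c)"
  using definable_map_op[OF definable_plus definable_map_const definable_map_id] .

lemma definable_set_plus:
  assumes H: "definable D H" and K: "definable D K"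
  shows "definable D (H + K)"
proof -
  have "definable_pred D (1 + 2) (\<lambda>ys. ys ! 1 \<in> H \<and> ys ! 2 \<in> K \<and> ys ! 0 = ys ! 1 + ys ! 2)"
    using definable_pred_reindex[OF H[unfolded definable_iff_pred], of "[1]"]
      definable_pred_reindex[OF K[unfolded definable_iff_pred], of "[2]"]
      definable_pred_reindex[OF definable_plus[unfolded definable_op_def], of "[1, 2, 0]"]
    by (intro definable_pred_conj) simp_all
  then have "definable_pred D 1 (\<lambda>xs. \<exists>zs. length zs = 2 \<and>
      (xs @ zs) ! 1 \<in> H \<and> (xs @ zs) ! 2 \<in> K \<and> (xs @ zs) ! 0 = (xs @ zs) ! 1 + (xs @ zs) ! 2)"
    by (rule definable_pred_ex_suffix)
  then show ?thesis
    unfolding definable_iff_pred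
  proof (rule definable_pred_cong)
    fix xs :: "'a list"
    assume xs: "length xs = 1"
    show "(\<exists>zs. length zs = 2 \<and>
        (xs @ zs) ! 1 \<in> H \<and> (xs @ zs) ! 2 \<in> K \<and> (xs @ zs) ! 0 = (xs @ zs) ! 1 + (xs @ zs) ! 2)
      = (xs ! 0 \<in> H + K)" (is "?lhs = ?rhs")
    proof
      assume ?lhs
      then show ?rhs
        using xs by (auto simp: nth_append numeral_2_eq_2 length_Suc_conv intro: set_plus_intro)
    next
      assume ?rhs
      then obtain h k where "h \<in> H" "k \<in> K" "xs ! 0 = h + k"
        by (auto elim: set_plus_elim)
      then show ?lhs
        using xs by (intro exI[of _ "[h, k]"]) (simp add: nth_append)
    qed
  qed
qed

lemma def_conn_subgroup_image:
  assumes H: "def_conn_subgroup D H" and f: "additive f" "definable_map D f"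
  shows "def_conn_subgroup D (f ` H)"
proof -
  have H': "add_subgroup H" "definable D H" "connected D H"
    using H by (auto simp: def_conn_subgroup_def)
  have "connected D (f ` H)"
    unfolding connected_def
  proof (intro allI impI)
    fix K
    assume K: "add_subgroup K" "K \<subseteq> f ` H" "definable D K" "finite ((\<lambda>x. (+) x ` K) ` f ` H)"
    have "add_subgroup (H \<inter> f -` K)"
      using add_subgroup_Int[OF H'(1) add_subgroup_vimage[OF f(1) K(1)]] .
    moreover have "definable D (H \<inter> f -` K)"
      using definable_Int[OF H'(2) definable_vimage[OF K(3) f(2)]] .
    moreover have "finite_index (H \<inter> f -` K) H"
      using finite_index_vimage[OF f(1) H'(1) K(1)] K(4) by (simp add: finite_index_def)
    ultimately have "H \<inter> f -` K = H"
      using connectedD[OF H'(3)] by blast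
    then show "K = f ` H"
      using K(2) by blast
  qed
  then show ?thesis
    using add_subgroup_image[OF f(1) H'(1)] definable_image[OF H'(2) f(2)]
    by (simp add: def_conn_subgroup_def)
qed

lemma def_conn_subgroup_set_plus:
  assumes H: "def_conn_subgroup D H" and K: "def_conn_subgroup D K"
  shows "def_conn_subgroup D (H + K)"
proof -
  have sg: "add_subgroup H" "add_subgroup K"
    using H K by (simp_all add: def_conn_subgroup_def)
  have "connected D (H + K)"
    unfolding connected_def
  proof (intro allI impI)
    fix J
    assume J: "add_subgroup J" "J \<subseteq> H + K" "definable D J" "finite ((\<lambda>x. (+) x ` J) ` (H + K))"
    then have "H \<subseteq> J" "K \<subseteq> J"
      using def_conn_subgroup_subset_of_finite_index[OF H J(1,3) subset_set_plus_left[OF sg(2)]]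
        def_conn_subgroup_subset_of_finite_index[OF K J(1,3) subset_set_plus_right[OF sg(1)]]
      by (simp_all add: finite_index_def)
    then show "J = H + K"
      using J(1,2) set_plus_least by blast
  qed
  then show ?thesis
    using add_subgroup_set_plus[OF sg] definable_set_plus[of H K] H K
    by (simp add: def_conn_subgroup_def)
qed

abbreviation rank :: "'a set \<Rightarrow> nat" where
  "rank H \<equiv> rk ((\<lambda>x. [x]) ` H)"

lemma Suc_le_rk_iff:
  "A \<in> D \<Longrightarrow> A \<noteq> {} \<Longrightarrow> Suc k \<le> rk A \<longleftrightarrow>
    (\<exists>F. infinite F \<and> F \<subseteq> D \<and> pairwise disjnt F \<and> (\<forall>X\<in>F. X \<subseteq> A \<and> X \<noteq> {} \<and> k \<le> rk X))"
  by (rule ranked[unfolded ranked_def, THEN conjunct2, THEN conjunct1, rule_format])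

lemma rk_fibration:
  assumes "A \<in> D" "B \<in> D" "A \<subseteq> tuples n" "B \<subseteq> tuples m" "B \<noteq> {}" "f ` A \<subseteq> B"
    and "{a @ f a | a. a \<in> A} \<in> D"
    and "\<And>b. b \<in> B \<Longrightarrow> {a \<in> A. f a = b} \<noteq> {} \<and> rk {a \<in> A. f a = b} = k"
  shows "rk A = rk B + k"
  using ranked[unfolded ranked_def, THEN conjunct2, THEN conjunct2, THEN conjunct2, THEN conjunct1,
      rule_format, OF assms]
  .

lemma rk_mono:
  assumes "A \<in> D" "B \<in> D" "A \<noteq> {}" "A \<subseteq> B"
  shows "rk A \<le> rk B"
proof (cases "rk A")
  case (Suc k)
  then have "Suc k \<le> rk A"
    by simp
  then obtain F where F: "infinite F" "F \<subseteq> D" "pairwise disjnt F" "\<forall>X\<in>F. X \<subseteq> A \<and> X \<noteq> {} \<and> k \<le> rk X"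
    using Suc_le_rk_iff[OF assms(1,3)] by blast
  have "B \<noteq> {}"
    using assms(3,4) by blast
  moreover have "\<forall>X\<in>F. X \<subseteq> B \<and> X \<noteq> {} \<and> k \<le> rk X"
    using F(4) assms(4) by blast
  ultimately have "Suc k \<le> rk B"
    using F(1-3) by (intro Suc_le_rk_iff[OF assms(2), THEN iffD2] exI[of _ F] conjI)
  with Suc show ?thesis
    by simp
qed simp

lemma rank_singleton: "rank {a} = 0"
proof (rule ccontr)
  assume "rank {a} \<noteq> 0"
  then have "Suc 0 \<le> rk {[a]}"
    by simp
  moreover have "{[a]} \<in> D"
    using definable_singleton[of a] by (simp add: definable_def)
  ultimately obtain F where F: "infinite F" "\<forall>X\<in>F. X \<subseteq> {[a]} \<and> X \<noteq> {} \<and> 0 \<le> rk X"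
    using Suc_le_rk_iff[OF _ insert_not_empty] by blast
  then have "F \<subseteq> {{[a]}}"
    by blast
  then have "finite F"
    by (rule finite_subset) simp
  with F(1) show False
    by simp
qed

lemma rank_translate:
  assumes K: "definable D K" "K \<noteq> {}"
  shows "rank ((+) c ` K) = rank K"
proof -
  let ?A = "(\<lambda>x. [x]) ` (+) c ` K" and ?B = "(\<lambda>x. [x]) ` K" and ?f = "\<lambda>xs. [xs ! 0 - c]"
  have cK: "definable D ((+) c ` K)"
    using definable_image[OF K(1) definable_map_translate] .
  have "{a @ ?f a | a. a \<in> ?A} = {xs \<in> tuples 2. xs ! 0 \<in> (+) c ` K \<and> xs ! 1 = - c + xs ! 0}"
    by (auto simp: tuples_def numeral_2_eq_2 length_Suc_conv)
  moreover have "definable_pred D 2 (\<lambda>xs. xs ! 0 \<in> (+) c ` K \<and> xs ! 1 = - c + xs ! 0)"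
    using definable_pred_reindex[OF cK[unfolded definable_iff_pred], of "[0]"] definable_map_translate[of "- c"]
    by (intro definable_pred_conj) (simp_all add: definable_map_def)
  ultimately have graph: "{a @ ?f a | a. a \<in> ?A} \<in> D"
    by (simp add: definable_pred_def)
  have fibre: "{a \<in> ?A. ?f a = [k]} = {[c + k]}" if "k \<in> K" for k
    using that by auto
  have "rk ?A = rk ?B + 0"
    using cK K rank_singleton fibre
    by (intro rk_fibration[OF _ _ _ _ _ _ graph]) (auto simp: definable_def tuples_def)
  then show ?thesis
    by simp
qed

lemma rank_less_of_infinite_index:
  assumes H: "definable D H" "add_subgroup H" and K: "definable D K" "add_subgroup K"
    and "K \<subseteq> H" and "\<not> finite_index K H"
  shows "rank K < rank H"
proof -
  let ?F = "(\<lambda>x. (\<lambda>y. [y]) ` (+) x ` K) ` H"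
  have "inj_on ((`) (\<lambda>y. [y])) ((\<lambda>x. (+) x ` K) ` H)"
    by (rule inj_on_image) (auto simp: inj_on_def)
  then have "infinite ((`) (\<lambda>y. [y]) ` (\<lambda>x. (+) x ` K) ` H)"
    using assms(6) by (simp add: finite_index_def finite_image_iff)
  then have "infinite ?F"
    by (simp add: image_image)
  moreover have "?F \<subseteq> D"
    using definable_image[OF K(1) definable_map_translate] by (auto simp: definable_def)
  moreover have "pairwise disjnt ?F"
    by (rule pairwise_disjnt_coset_tuples[OF K(2)])
  moreover have "\<forall>X\<in>?F. X \<subseteq> (\<lambda>x. [x]) ` H \<and> X \<noteq> {} \<and> rank K \<le> rk X"
  proof
    fix X
    assume "X \<in> ?F"
    then obtain x where x: "x \<in> H" "X = (\<lambda>x. [x]) ` (+) x ` K"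
      by blast
    have "(+) x ` K \<subseteq> H"
      using x(1) assms(5) add_subgroup_add[OF H(2)] by blast
    moreover have "K \<noteq> {}"
      using add_subgroup_zero[OF K(2)] by blast
    ultimately show "X \<subseteq> (\<lambda>x. [x]) ` H \<and> X \<noteq> {} \<and> rank K \<le> rk X"
      using x rank_translate[OF K(1)] by auto
  qed
  ultimately have "\<exists>F. infinite F \<and> F \<subseteq> D \<and> pairwise disjnt F \<and>
      (\<forall>X\<in>F. X \<subseteq> (\<lambda>x. [x]) ` H \<and> X \<noteq> {} \<and> rank K \<le> rk X)"
    by (intro exI[of _ ?F]) simp
  moreover have "(\<lambda>x. [x]) ` H \<in> D" "(\<lambda>x. [x]) ` H \<noteq> {}"
    using H add_subgroup_zero[OF H(2)] by (auto simp: definable_def)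
  ultimately have "Suc (rank K) \<le> rank H"
    by (simp add: Suc_le_rk_iff)
  then show ?thesis
    by simp
qed

lemma rank_le_rank_UNIV: "definable D H \<Longrightarrow> H \<noteq> {} \<Longrightarrow> rank H \<le> rank UNIV"
  using definable_UNIV by (intro rk_mono) (auto simp: definable_def)

lemma subset_of_rank_set_plus_le:
  assumes S: "def_conn_subgroup D S" and H: "def_conn_subgroup D H" and "rank (S + H) \<le> rank S"
  shows "H \<subseteq> S"
proof -
  have S': "add_subgroup S" "definable D S"
    using S by (simp_all add: def_conn_subgroup_def)
  have SH: "add_subgroup (S + H)" "definable D (S + H)" "connected D (S + H)"
    using def_conn_subgroup_set_plus[OF S H] by (simp_all add: def_conn_subgroup_def)
  have S_sub: "S \<subseteq> S + H"
    using H by (intro subset_set_plus_left) (simp add: def_conn_subgroup_def)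
  then have "finite_index S (S + H)"
    using rank_less_of_infinite_index[OF SH(2,1) S'(2,1)] assms(3) by (meson not_less)
  then have "S = S + H"
    using connectedD[OF SH(3) S'(1) S_sub S'(2)] by blast
  then show ?thesis
    using subset_set_plus_right[OF S'(1)] by blast
qed

lemma def_conn_subgroup_gen_subgroup:
  assumes "\<And>H. H \<in> \<H> \<Longrightarrow> def_conn_subgroup D H"
  shows "def_conn_subgroup D (gen_subgroup (\<Union>\<H>))"
proof -
  let ?G = "gen_subgroup (\<Union>\<H>)"
  let ?P = "\<lambda>S. def_conn_subgroup D S \<and> S \<subseteq> ?G"
  have "?P {0}"
    using def_conn_subgroup_zero[OF definable_singleton] add_subgroup_zero[OF add_subgroup_gen_subgroup]
    by blast
  moreover have "rank S < Suc (rank UNIV)" if "?P S" for S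
  proof -
    have "definable D S" "S \<noteq> {}"
      using that add_subgroup_zero by (auto simp: def_conn_subgroup_def)
    then show ?thesis
      using rank_le_rank_UNIV by (simp add: le_imp_less_Suc)
  qed
  ultimately obtain S where S: "?P S" and S_max: "\<And>S'. ?P S' \<Longrightarrow> rank S' \<le> rank S"
    using ex_has_greatest_nat[of ?P "{0}" rank "Suc (rank UNIV)"] by blast
  have "H \<subseteq> S" if "H \<in> \<H>" for H
  proof (rule subset_of_rank_set_plus_le[OF _ assms[OF that]])
    show "def_conn_subgroup D S"
      using S by blast
    have "H \<subseteq> ?G"
      using that subset_gen_subgroup by blast
    then have "S + H \<subseteq> ?G"
      using S by (intro set_plus_least add_subgroup_gen_subgroup) auto
    then show "rank (S + H) \<le> rank S"
      using S_max def_conn_subgroup_set_plus S assms[OF that] by blast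
  qed
  then have "?G \<subseteq> S"
    using S by (intro gen_subgroup_least) (auto simp: def_conn_subgroup_def)
  with S have "S = ?G"
    by blast
  with S show ?thesis
    by simp
qed

end

section \<open>Lie rings and the lower central series of the derived ring\<close>

locale lie =
  fixes br :: "'a::ab_group_add \<Rightarrow> 'a \<Rightarrow> 'a"
  assumes lie_ring: "lie_ring br"
begin

lemma bracket_add_left: "br (x + y) z = br x z + br y z"
  using lie_ring by (simp add: lie_ring_def)

lemma bracket_add_right: "br x (y + z) = br x y + br x z"
  using lie_ring by (simp add: lie_ring_def)

lemma bracket_self [simp]: "br x x = 0"
  using lie_ring by (simp add: lie_ring_def)

lemma jacobi: "br x (br y z) + br y (br z x) + br z (br x y) = 0"
  using lie_ring by (simp add: lie_ring_def)

lemma additive_bracket_left: "additive (\<lambda>x. br x a)"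
  by (simp add: additive_def bracket_add_left)

lemma additive_bracket_right: "additive (br a)"
  by (simp add: additive_def bracket_add_right)

lemma additive_twist_map: "additive (\<lambda>x. x + br l x)"
  by (simp add: additive_def bracket_add_right algebra_simps)

lemma bracket_minus_left: "br (- x) y = - br x y"
  using additive.minus[OF additive_bracket_left] .

lemma bracket_minus_right: "br x (- y) = - br x y"
  using additive.minus[OF additive_bracket_right] .

lemmas bracket_distribs = bracket_add_left bracket_add_right bracket_minus_left bracket_minus_right

lemma bracket_antisym: "br x y = - br y x"
proof -
  have "br x x + br y x + (br x y + br y y) = 0"
    using bracket_self[of "x + y"] unfolding bracket_add_left bracket_add_right .
  then show ?thesis
    by (simp add: eq_neg_iff_add_eq_0 add.commute)
qed

lemma bracket_leibniz: "br x (br a b) = br a (br x b) + br (br x a) b"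
proof -
  have "br x (br a b) = - (br a (br b x) + br b (br x a))"
    using jacobi[of x a b] by (simp only: eq_neg_iff_add_eq_0 add.assoc)
  also have "\<dots> = br a (br x b) + br (br x a) b"
    using bracket_antisym[of b x] bracket_antisym[of b "br x a"] by (simp add: bracket_minus_right)
  finally show ?thesis .
qed

lemma lie_ideal_add_subgroup: "lie_ideal br I \<Longrightarrow> add_subgroup I"
  by (simp add: lie_ideal_def)

lemma lie_ideal_bracket_right: "lie_ideal br I \<Longrightarrow> y \<in> I \<Longrightarrow> br x y \<in> I"
  by (simp add: lie_ideal_def)

lemma lie_ideal_bracket_left:
  assumes "lie_ideal br I" and "x \<in> I"
  shows "br x y \<in> I"
proof -
  have "- br y x \<in> I"
    using assms by (simp add: lie_ideal_def add_subgroup_uminus)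
  then show ?thesis
    by (simp add: bracket_antisym[of x y])
qed

lemma lie_subring_set_plus_ideal:
  assumes M: "lie_subring br M" and L: "lie_ideal br L" and LL: "\<And>a b. a \<in> L \<Longrightarrow> b \<in> L \<Longrightarrow> br a b \<in> M"
  shows "lie_subring br (M + L)"
proof -
  have sg: "add_subgroup M" "add_subgroup L"
    using M L by (simp_all add: lie_subring_def lie_ideal_def)
  have "br u v \<in> M + L" if uv: "u \<in> M + L" "v \<in> M + L" for u v
  proof -
    obtain m a where u: "u = m + a" "m \<in> M" "a \<in> L"
      using uv(1) by (rule set_plus_elim)
    obtain m' a' where v: "v = m' + a'" "m' \<in> M" "a' \<in> L"
      using uv(2) by (rule set_plus_elim)
    have "br u v = (br m m' + br a a') + (br m a' + br a m')"
      unfolding u(1) v(1) by (simp add: bracket_distribs algebra_simps)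
    moreover have "br m m' + br a a' \<in> M"
      using M u v LL by (intro add_subgroup_add[OF sg(1)]) (simp_all add: lie_subring_def)
    moreover have "br m a' + br a m' \<in> L"
      using u v lie_ideal_bracket_left[OF L] lie_ideal_bracket_right[OF L]
      by (intro add_subgroup_add[OF sg(2)]) simp_all
    ultimately show ?thesis
      by (simp add: set_plus_intro)
  qed
  then show ?thesis
    using add_subgroup_set_plus[OF sg] by (simp add: lie_subring_def)
qed

lemma derived_1_eq: "derived br 1 = gen_subgroup (\<Union>a. range (br a))"
  unfolding One_nat_def derived.simps br_set_def by (rule arg_cong[where f = gen_subgroup]) blast

lemma bracket_mem_derived_1: "br a b \<in> derived br 1"
  unfolding derived_1_eq by (rule subsetD[OF subset_gen_subgroup]) blast

lemma lcs_Suc_eq: "lcs br h (Suc k) = gen_subgroup (\<Union>a\<in>lcs br h k. br a ` h)"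
  unfolding lcs.simps br_set_def by (rule arg_cong[where f = gen_subgroup]) blast

lemma bracket_mem_lcs_Suc: "a \<in> lcs br h k \<Longrightarrow> b \<in> h \<Longrightarrow> br a b \<in> lcs br h (Suc k)"
  unfolding lcs_Suc_eq by (rule subsetD[OF subset_gen_subgroup]) blast

lemma add_subgroup_lcs_Suc: "add_subgroup (lcs br h (Suc k))"
  unfolding lcs_Suc_eq by (rule add_subgroup_gen_subgroup)

lemma lie_ideal_derived_1: "lie_ideal br (derived br 1)"
proof -
  have "add_subgroup (derived br 1)"
    unfolding derived_1_eq by (rule add_subgroup_gen_subgroup)
  then show ?thesis
    using bracket_mem_derived_1 by (simp add: lie_ideal_def del: derived.simps)
qed

lemma lie_ideal_lcs_derived: "lie_ideal br (lcs br (derived br 1) k)"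
proof (induction k)
  case 0
  show ?case
    using lie_ideal_derived_1 by simp
next
  case (Suc k)
  let ?N = "lcs br (derived br 1)"
  let ?S = "\<Union>a\<in>?N k. br a ` derived br 1"
  have N_Suc: "?N (Suc k) = gen_subgroup ?S"
    by (rule lcs_Suc_eq)
  have "br x ` ?S \<subseteq> ?N (Suc k)" for x
  proof
    fix z
    assume "z \<in> br x ` ?S"
    then obtain a b where ab: "a \<in> ?N k" "b \<in> derived br 1" "z = br x (br a b)"
      by blast
    have "br a (br x b) \<in> ?N (Suc k)"
      by (rule bracket_mem_lcs_Suc[OF ab(1) bracket_mem_derived_1])
    moreover have "br (br x a) b \<in> ?N (Suc k)"
      by (rule bracket_mem_lcs_Suc[OF lie_ideal_bracket_right[OF Suc.IH ab(1)] ab(2)])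
    ultimately show "z \<in> ?N (Suc k)"
      unfolding ab(3) bracket_leibniz[of x a b] by (rule add_subgroup_add[OF add_subgroup_lcs_Suc])
  qed
  then have "br x ` ?N (Suc k) \<subseteq> ?N (Suc k)" for x
    unfolding N_Suc by (rule additive_image_gen_subgroup[OF additive_bracket_right add_subgroup_gen_subgroup])
  then show ?case
    using add_subgroup_lcs_Suc[of "derived br 1" k] unfolding lie_ideal_def by blast
qed

lemma lcs_derived_Suc_subset: "lcs br (derived br 1) (Suc k) \<subseteq> lcs br (derived br 1) k"
  unfolding lcs_Suc_eq[of _ k]
proof (rule gen_subgroup_least)
  show "add_subgroup (lcs br (derived br 1) k)"
    using lie_ideal_lcs_derived by (rule lie_ideal_add_subgroup)
  show "(\<Union>a\<in>lcs br (derived br 1) k. br a ` derived br 1) \<subseteq> lcs br (derived br 1) k"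
    using lie_ideal_bracket_left[OF lie_ideal_lcs_derived] by blast
qed

lemma lcs_derived_subset: "lcs br (derived br 1) k \<subseteq> derived br 1"
proof (induction k)
  case (Suc k)
  then show ?case
    by (rule subset_trans[OF lcs_derived_Suc_subset])
qed simp

lemma bracket_mem_lcs_derived_Suc:
  "a \<in> lcs br (derived br 1) k \<Longrightarrow> b \<in> lcs br (derived br 1) k \<Longrightarrow> br a b \<in> lcs br (derived br 1) (Suc k)"
  using bracket_mem_lcs_Suc lcs_derived_subset by blast

end

section \<open>Twisting subrings\<close>

text \<open>For an ideal \<open>B\<close> with \<open>[L, L] \<subseteq> B\<close> and \<open>l \<in> L\<close>, the map \<open>1 + ad l\<close> respects brackets
  modulo \<open>B\<close> and has inverse \<open>1 - ad l\<close> modulo \<open>B\<close>, because \<open>[ad l x, ad l y]\<close> and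
  \<open>(ad l)\<^sup>2 x\<close> lie in \<open>B\<close>.\<close>

definition twist :: "('a::ab_group_add \<Rightarrow> 'a \<Rightarrow> 'a) \<Rightarrow> 'a set \<Rightarrow> 'a \<Rightarrow> 'a set \<Rightarrow> 'a set" where
  "twist br B l H = (\<lambda>x. x + br l x) ` H + B"

lemma twist_memI: "h \<in> H \<Longrightarrow> b \<in> B \<Longrightarrow> h + br l h + b \<in> twist br B l H"
  unfolding twist_def by (intro set_plus_intro) auto

lemma twist_memE:
  assumes "z \<in> twist br B l H"
  obtains h b where "z = h + br l h + b" "h \<in> H" "b \<in> B"
  using assms unfolding twist_def by (auto elim!: set_plus_elim)

lemma twist_mono: "H \<subseteq> H' \<Longrightarrow> twist br B l H \<subseteq> twist br B l H'"
  unfolding twist_def by (intro set_plus_mono2 image_mono) auto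

locale lie_section = lie br
  for br :: "'a::ab_group_add \<Rightarrow> 'a \<Rightarrow> 'a" +
  fixes L B :: "'a set"
  assumes lie_ideal_L: "lie_ideal br L"
    and lie_ideal_B: "lie_ideal br B"
    and bracket_L_L: "a \<in> L \<Longrightarrow> b \<in> L \<Longrightarrow> br a b \<in> B"
begin

lemma add_subgroup_B: "add_subgroup B"
  using lie_ideal_B by (rule lie_ideal_add_subgroup)

lemma bracket_bracket_mem_B: "l \<in> L \<Longrightarrow> br l (br l x) \<in> B"
  using bracket_L_L lie_ideal_bracket_left[OF lie_ideal_L] by blast

lemma add_subgroup_twist: "add_subgroup H \<Longrightarrow> add_subgroup (twist br B l H)"
  unfolding twist_def
  by (intro add_subgroup_set_plus add_subgroup_image[OF additive_twist_map] add_subgroup_B)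

lemma subset_twist: "add_subgroup H \<Longrightarrow> B \<subseteq> twist br B l H"
  unfolding twist_def by (intro subset_set_plus_right add_subgroup_image[OF additive_twist_map])

lemma lie_subring_twist:
  assumes l: "l \<in> L" and H: "lie_subring br H"
  shows "lie_subring br (twist br B l H)"
proof -
  have "br u v \<in> twist br B l H" if uv: "u \<in> twist br B l H" "v \<in> twist br B l H" for u v
  proof -
    obtain h b where u: "u = h + br l h + b" "h \<in> H" "b \<in> B"
      using uv(1) by (rule twist_memE)
    obtain h' b' where v: "v = h' + br l h' + b'" "h' \<in> H" "b' \<in> B"
      using uv(2) by (rule twist_memE)
    have lh: "br l h \<in> L" "br l h' \<in> L"
      using lie_ideal_bracket_left[OF lie_ideal_L l] by auto
    have "br u v = br h h' + br l (br h h') + (br (br l h) (br l h') + br h b' + br (br l h) b'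
        + br b h' + br b (br l h') + br b b')"
      unfolding u(1) v(1) using bracket_leibniz[of l h h'] by (simp add: bracket_distribs algebra_simps)
    moreover have "br h h' \<in> H"
      using H u(2) v(2) by (simp add: lie_subring_def)
    moreover have "br (br l h) (br l h') + br h b' + br (br l h) b' + br b h' + br b (br l h') + br b b' \<in> B"
      using bracket_L_L[OF lh] lie_ideal_bracket_left[OF lie_ideal_B] lie_ideal_bracket_right[OF lie_ideal_B] u(3) v(3)
      by (intro add_subgroup_add[OF add_subgroup_B]) simp_all
    ultimately show ?thesis
      by (simp add: twist_memI)
  qed
  moreover have "add_subgroup H"
    using H by (simp add: lie_subring_def)
  ultimately show ?thesis
    using add_subgroup_twist by (simp add: lie_subring_def)
qed

lemma twist_neg_twist:
  assumes l: "l \<in> L" and H: "add_subgroup H" and BH: "B \<subseteq> H"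
  shows "twist br B (- l) (twist br B l H) = H"
proof
  show "twist br B (- l) (twist br B l H) \<subseteq> H"
  proof
    fix z
    assume "z \<in> twist br B (- l) (twist br B l H)"
    then obtain w b' where z: "z = w + br (- l) w + b'" "w \<in> twist br B l H" "b' \<in> B"
      by (rule twist_memE)
    obtain h b where w: "w = h + br l h + b" "h \<in> H" "b \<in> B"
      using z(2) by (rule twist_memE)
    have "z = h + (b + b' - br l (br l h) - br l b)"
      unfolding z(1) w(1) by (simp add: bracket_distribs algebra_simps)
    moreover have "b + b' - br l (br l h) - br l b \<in> B"
      using w(3) z(3) bracket_bracket_mem_B[OF l] lie_ideal_bracket_right[OF lie_ideal_B w(3)]
      by (intro add_subgroup_diff[OF add_subgroup_B] add_subgroup_add[OF add_subgroup_B])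
    ultimately show "z \<in> H"
      using w(2) BH add_subgroup_add[OF H] by auto
  qed
next
  show "H \<subseteq> twist br B (- l) (twist br B l H)"
  proof
    fix h
    assume "h \<in> H"
    then have "h + br l h + 0 \<in> twist br B l H"
      using add_subgroup_zero[OF add_subgroup_B] by (rule twist_memI)
    moreover have "h = (h + br l h + 0) + br (- l) (h + br l h + 0) + br l (br l h)"
      by (simp add: bracket_distribs)
    ultimately show "h \<in> twist br B (- l) (twist br B l H)"
      using bracket_bracket_mem_B[OF l] by (metis twist_memI)
  qed
qed

lemma twist_UNIV: "l \<in> L \<Longrightarrow> twist br B l UNIV = UNIV"
proof -
  assume l: "l \<in> L"
  then have "- l \<in> L"
    by (simp add: add_subgroup_uminus lie_ideal_add_subgroup[OF lie_ideal_L])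
  then have "UNIV = twist br B l (twist br B (- l) UNIV)"
    using twist_neg_twist[OF \<open>- l \<in> L\<close> add_subgroup_UNIV subset_UNIV] by simp
  also have "\<dots> \<subseteq> twist br B l UNIV"
    by (rule twist_mono) simp
  finally show ?thesis
    by blast
qed

lemma bracket_mem_of_mem_twist:
  assumes l: "l \<in> L" and M: "add_subgroup M" and BM: "B \<subseteq> M"
    and y: "y \<in> M" "y \<in> twist br B l M"
  shows "br l y \<in> M"
proof -
  obtain m b where y': "y = m + br l m + b" "m \<in> M" "b \<in> B"
    using y(2) by (rule twist_memE)
  have "br l m = y - m - b"
    using y'(1) by (simp add: algebra_simps)
  then have "br l m \<in> M"
    using y(1) y'(2,3) BM add_subgroup_diff[OF M] by auto
  moreover have "br l y = br l m + br l (br l m) + br l b"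
    unfolding y'(1) by (simp add: bracket_distribs)
  moreover have "br l (br l m) \<in> M" "br l b \<in> M"
    using bracket_bracket_mem_B[OF l] lie_ideal_bracket_right[OF lie_ideal_B y'(3)] BM by auto
  ultimately show ?thesis
    using add_subgroup_add[OF M] by simp
qed

end

section \<open>Maximal definable connected subrings and the Frattini subring\<close>

lemma add_subgroup_frattini: "add_subgroup (frattini br D)"
proof -
  have sg: "add_subgroup M" if "maximal_def_conn_subring br D M" for M
    using that by (simp add: maximal_def_conn_subring_def def_conn_subring_def lie_subring_def)
  show ?thesis
    unfolding add_subgroup_def frattini_def
  proof (intro conjI ballI)
    show "0 \<in> \<Inter>{M. maximal_def_conn_subring br D M}"
      using sg add_subgroup_zero by blast
  next
    fix x y
    assume "x \<in> \<Inter>{M. maximal_def_conn_subring br D M}" "y \<in> \<Inter>{M. maximal_def_conn_subring br D M}"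
    then show "x - y \<in> \<Inter>{M. maximal_def_conn_subring br D M}"
      using sg add_subgroup_diff by blast
  qed
qed

lemma frattini_subset_maximal: "maximal_def_conn_subring br D M \<Longrightarrow> frattini br D \<subseteq> M"
  unfolding frattini_def by blast

locale ranked_lie = ranked_group D rk + lie br
  for D :: "'a::ab_group_add list set set" and rk :: "'a list set \<Rightarrow> nat" and br +
  assumes definable_bracket: "definable_op D br"
begin

lemma definable_map_bracket: "definable_map D (br a)"
  using definable_map_op[OF definable_bracket definable_map_const definable_map_id] .

lemma definable_map_twist: "definable_map D (\<lambda>x. x + br l x)"
  using definable_map_op[OF definable_plus definable_map_id definable_map_bracket] .

lemma def_conn_subgroup_derived_1:
  assumes "connected D UNIV"
  shows "def_conn_subgroup D (derived br 1)"
proof -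
  have "def_conn_subgroup D (br a ` UNIV)" for a
    using assms additive_bracket_right definable_map_bracket
    by (intro def_conn_subgroup_image) (simp_all add: def_conn_subgroup_def add_subgroup_UNIV definable_UNIV)
  then show ?thesis
    unfolding derived_1_eq by (intro def_conn_subgroup_gen_subgroup) blast
qed

lemma def_conn_subgroup_lcs_derived:
  assumes "connected D UNIV"
  shows "def_conn_subgroup D (lcs br (derived br 1) k)"
proof (cases k)
  case 0
  then show ?thesis
    using def_conn_subgroup_derived_1[OF assms] by simp
next
  case (Suc i)
  have "def_conn_subgroup D (br a ` derived br 1)" for a
    using def_conn_subgroup_derived_1[OF assms] additive_bracket_right definable_map_bracket
    by (rule def_conn_subgroup_image)
  then show ?thesis
    unfolding Suc lcs_Suc_eq by (intro def_conn_subgroup_gen_subgroup) blast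
qed

lemma set_plus_eq_UNIV_of_maximal:
  assumes M: "maximal_def_conn_subring br D M"
    and L: "lie_ideal br L" "def_conn_subgroup D L"
    and LL: "\<And>a b. a \<in> L \<Longrightarrow> b \<in> L \<Longrightarrow> br a b \<in> M"
    and "\<not> L \<subseteq> M"
  shows "M + L = UNIV"
proof (rule ccontr)
  assume proper: "M + L \<noteq> UNIV"
  have M': "lie_subring br M" "definable D M" "connected D M"
    using M by (simp_all add: maximal_def_conn_subring_def def_conn_subring_def)
  have "def_conn_subgroup D (M + L)"
    using M' L(2) by (intro def_conn_subgroup_set_plus) (simp_all add: def_conn_subgroup_def lie_subring_def)
  moreover have "lie_subring br (M + L)"
    by (rule lie_subring_set_plus_ideal[OF M'(1) L(1) LL])
  ultimately have "def_conn_subring br D (M + L)"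
    by (simp add: def_conn_subring_def def_conn_subgroup_def)
  moreover have "M \<subseteq> M + L"
    using lie_ideal_add_subgroup[OF L(1)] by (rule subset_set_plus_left)
  ultimately have "M + L = M"
    using M proper by (simp add: maximal_def_conn_subring_def)
  moreover have "L \<subseteq> M + L"
    using M'(1) by (intro subset_set_plus_right) (simp add: lie_subring_def)
  ultimately show False
    using assms(5) by blast
qed

end

locale ranked_lie_section = ranked_lie D rk br + lie_section br L B
  for D :: "'a::ab_group_add list set set" and rk br L B +
  assumes def_conn_subgroup_B: "def_conn_subgroup D B"
begin

lemma def_conn_subring_twist:
  assumes l: "l \<in> L" and H: "def_conn_subring br D H"
  shows "def_conn_subring br D (twist br B l H)"
proof -
  have H': "lie_subring br H" "def_conn_subgroup D H"
    using H by (simp_all add: def_conn_subring_def def_conn_subgroup_def lie_subring_def)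
  have "def_conn_subgroup D (twist br B l H)"
    unfolding twist_def using H'(2) additive_twist_map definable_map_twist def_conn_subgroup_B
    by (intro def_conn_subgroup_set_plus def_conn_subgroup_image)
  then show ?thesis
    using lie_subring_twist[OF l H'(1)] by (simp add: def_conn_subring_def def_conn_subgroup_def)
qed

lemma maximal_twist:
  assumes M: "maximal_def_conn_subring br D M" and BM: "B \<subseteq> M" and l: "l \<in> L"
  shows "maximal_def_conn_subring br D (twist br B l M)"
proof -
  have M': "def_conn_subring br D M" "M \<noteq> UNIV" "add_subgroup M"
    using M by (simp_all add: maximal_def_conn_subring_def def_conn_subring_def lie_subring_def)
  have l': "- l \<in> L"
    by (simp add: l add_subgroup_uminus lie_ideal_add_subgroup[OF lie_ideal_L])
  have M_back: "twist br B (- l) (twist br B l M) = M"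
    by (rule twist_neg_twist[OF l M'(3) BM])
  have "twist br B l M \<noteq> UNIV"
    using M_back M'(2) twist_UNIV[OF l'] by auto
  moreover have "K = twist br B l M"
    if K: "def_conn_subring br D K" "K \<noteq> UNIV" "twist br B l M \<subseteq> K" for K
  proof -
    have sK: "add_subgroup K"
      using K(1) by (simp add: def_conn_subring_def lie_subring_def)
    have K_back: "twist br B l (twist br B (- l) K) = K"
      using twist_neg_twist[OF l' sK] subset_twist[OF M'(3)] K(3) by auto
    have "def_conn_subring br D (twist br B (- l) K)"
      by (rule def_conn_subring_twist[OF l' K(1)])
    moreover have "twist br B (- l) K \<noteq> UNIV"
      using K_back K(2) twist_UNIV[OF l] by auto
    moreover have "M \<subseteq> twist br B (- l) K"
      using twist_mono[OF K(3), where br = br and B = B and l = "- l"] M_back by simp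
    ultimately have "twist br B (- l) K = M"
      using M by (simp add: maximal_def_conn_subring_def)
    then show ?thesis
      using K_back by simp
  qed
  ultimately show ?thesis
    using def_conn_subring_twist[OF l M'(1)] by (simp add: maximal_def_conn_subring_def)
qed

end

context ranked_lie
begin

lemma bracket_mem_maximal_of_lcs_step:
  assumes conn: "connected D UNIV" and M: "maximal_def_conn_subring br D M" and y: "y \<in> frattini br D"
    and i: "\<not> lcs br (derived br 1) i \<subseteq> M" "lcs br (derived br 1) (Suc i) \<subseteq> M"
  shows "br x y \<in> M"
proof -
  let ?N = "lcs br (derived br 1)"
  have M': "add_subgroup M" "lie_subring br M"
    using M by (simp_all add: maximal_def_conn_subring_def def_conn_subring_def lie_subring_def)
  have yM: "y \<in> M"
    using frattini_subset_maximal[OF M] y by blast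
  interpret layer: ranked_lie_section D rk br "?N i" "?N (Suc i)"
    by unfold_locales
      (assumption | rule lie_ideal_lcs_derived bracket_mem_lcs_derived_Suc def_conn_subgroup_lcs_derived[OF conn])+
  have "M + ?N i = UNIV"
  proof (rule set_plus_eq_UNIV_of_maximal[OF M lie_ideal_lcs_derived def_conn_subgroup_lcs_derived[OF conn] _ i(1)])
    fix a b
    assume "a \<in> ?N i" "b \<in> ?N i"
    then show "br a b \<in> M"
      using i(2) bracket_mem_lcs_derived_Suc by blast
  qed
  then have "x \<in> M + ?N i"
    by simp
  then obtain m a where x: "x = m + a" "m \<in> M" "a \<in> ?N i"
    by (rule set_plus_elim)
  have "br m y \<in> M"
    using M'(2) x(2) yM by (simp add: lie_subring_def)
  moreover have "y \<in> twist br (?N (Suc i)) a M"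
    using frattini_subset_maximal[OF layer.maximal_twist[OF M i(2) x(3)]] y by blast
  then have "br a y \<in> M"
    by (rule layer.bracket_mem_of_mem_twist[OF x(3) M'(1) i(2) yM])
  ultimately show ?thesis
    unfolding x(1) bracket_add_left by (rule add_subgroup_add[OF M'(1)])
qed

lemma bracket_mem_maximal_of_mem_frattini:
  assumes conn: "connected D UNIV" and nil: "nilpotent_subring br (derived br 1)"
    and M: "maximal_def_conn_subring br D M" and y: "y \<in> frattini br D"
  shows "br x y \<in> M"
proof -
  let ?N = "lcs br (derived br 1)"
  obtain k where "?N k = {0}"
    using nil by (auto simp: nilpotent_subring_def)
  then have "?N k \<subseteq> M"
    using M by (simp add: maximal_def_conn_subring_def def_conn_subring_def lie_subring_def add_subgroup_zero)
  show ?thesis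
  proof (cases "?N 0 \<subseteq> M")
    case True
    moreover have "?N 0 = derived br 1"
      by (simp only: lcs.simps)
    ultimately show ?thesis
      using bracket_mem_derived_1 by blast
  next
    case False
    obtain i where "\<forall>j\<le>i. \<not> ?N j \<subseteq> M" "?N (Suc i) \<subseteq> M"
      using ex_least_nat_less[of "\<lambda>j. ?N j \<subseteq> M", OF \<open>?N k \<subseteq> M\<close> False] by blast
    then show ?thesis
      using bracket_mem_maximal_of_lcs_step[OF conn M y] by blast
  qed
qed

end

lemma ranked_lie_of_ranked_lie_ring: "ranked_lie_ring br D rk \<Longrightarrow> ranked_lie D rk br"
  unfolding ranked_lie_ring_def
  by unfold_locales (simp_all add: definable_op_iff_graph)

theorem mainTheorem11:
  fixes br :: "'a::ab_group_add \<Rightarrow> 'a \<Rightarrow> 'a"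
    and D :: "'a list set set" and rk :: "'a list set \<Rightarrow> nat"
  assumes "ranked_lie_ring br D rk"
    and "connected D UNIV"
    and "soluble br"
    and "nilpotent_subring br (derived br 1)"
  shows "lie_ideal br (frattini br D)"
proof -
  interpret ranked_lie D rk br
    using assms(1) by (rule ranked_lie_of_ranked_lie_ring)
  have "br x y \<in> frattini br D" if "y \<in> frattini br D" for x y
    using bracket_mem_maximal_of_mem_frattini[OF assms(2,4) _ that] by (simp add: frattini_def)
  then show ?thesis
    using add_subgroup_frattini by (simp add: lie_ideal_def)
qed

end
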